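(* Let $n>1$ be an integer with $F_n=D_n$, and let $p$ be the largest prime divisor of $n$. Then $F_{n/p}=D_{n/p}$ and $F_{np}=D_{np}$.
   Context: For a composite integer $m$, let $d(m)$ denote the largest divisor of $m$ with $1<d(m)<m$. Define $f$ on integers $m>1$ by $f(m)=m-1$ if $m$ is prime and $f(m)=m-d(m)$ if $m$ is composite. Let $f^{(0)}(m)=m$, $f^{(i)}=f\circ f^{(i-1)}$. Define $F_m=\{m,f(m),f^{(2)}(m),\dots,1\}$, the set of iterates of $f$ from $m$ up to and including the first occurrence of $1$ (with $F_1=\{1\}$), and let $D_m$ be the set of positive divisors of $m$. *)

theory Defs
  imports "HOL-Computational_Algebra.Primes"
begin

definition dlarge :: "nat \<Rightarrow> nat" where
  "dlarge m = Max {d. d dvd m \<and> 1 < d \<and> d < m}"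

definition fstep :: "nat \<Rightarrow> nat" where
  "fstep m = (if prime m then m - 1 else m - dlarge m)"

text \<open>F_m: iterates of f from m up to and including the first occurrence of 1.\<close>
definition Fset :: "nat \<Rightarrow> nat set" where
  "Fset m = {(fstep ^^ i) m | i. \<forall>j<i. (fstep ^^ j) m \<noteq> 1}"

definition Dset :: "nat \<Rightarrow> nat set" where
  "Dset m = {d. 0 < d \<and> d dvd m}"

end

theory Submission
  imports Defs
begin

text \<open>
  If q is the least prime factor of k > 1, then d(k) = k/q, so f(k) = (k/q)(q - 1).
  When every prime factor of m is at most the prime p, the numbers m and mp have the same
  least prime factor, whence f(mp) = p f(m), and f(m) again has all its prime factors at
  most p. Iterating gives F(mp) = p F(m) \<union> F(p - 1), where F(p - 1) \<subseteq> [1, p - 1] contains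
  no multiple of p; likewise D(mp) = p D(m) \<union> {d \<in> D(m). p \<nmid> d}. Comparing the multiples
  and the non-multiples of p in F(n) = D(n) for n = mp yields F(m) = D(m) and
  F(p - 1) = {d \<in> D(m). p \<nmid> d}, and then F(np) = p D(n) \<union> F(p - 1) = D(np).
\<close>

lemma ex_least_prime_factor:
  fixes k :: nat
  assumes "k > 1"
  shows "\<exists>q. prime q \<and> q dvd k \<and> (\<forall>r. prime r \<and> r dvd k \<longrightarrow> q \<le> r)"
proof -
  have ex: "\<exists>q. prime q \<and> q dvd k"
    using prime_factor_nat[of k] assms by auto
  show ?thesis
    using LeastI_ex[OF ex] Least_le[of "\<lambda>q. prime q \<and> q dvd k"] by blast
qed

lemma dlarge_eq_div_least_prime_factor:
  fixes k q :: nat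
  assumes k: "k > 1" "\<not> prime k" and q: "prime q" "q dvd k"
    and least: "\<forall>r. prime r \<and> r dvd k \<longrightarrow> q \<le> r"
  shows "dlarge k = k div q"
proof -
  obtain e where e: "k = q * e"
    using q by blast
  have q1: "q > 1"
    using q prime_gt_1_nat by blast
  have "e \<noteq> 0" "e \<noteq> 1"
    using e k q by auto
  then have e1: "e > 1"
    by simp
  have cofactor_le: "d \<le> e" if d: "d dvd k" "d < k" for d
  proof -
    obtain c where c: "k = d * c"
      using d by blast
    have "c \<noteq> 0" "c \<noteq> 1"
      using c d k by auto
    then have "c > 1"
      by simp
    then obtain r where r: "prime r" "r dvd c"
      using prime_factor_nat[of c] by auto
    have "q \<le> r"
      using least r c by simp
    also have "r \<le> c"
      using r \<open>c > 1\<close> by (simp add: dvd_imp_le)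
    finally have "q \<le> c" .
    then have "d * q \<le> q * e"
      using c e by simp
    then show ?thesis
      using q1 by (simp add: mult.commute)
  qed
  have "Max {d. d dvd k \<and> 1 < d \<and> d < k} = e"
    using e e1 q1 cofactor_le k by (intro Max_eqI) auto
  then show ?thesis
    unfolding dlarge_def using e q1 by simp
qed

lemma fstep_eq_least_prime_factor:
  fixes k q :: nat
  assumes k: "k > 1" and q: "prime q" "q dvd k"
    and least: "\<forall>r. prime r \<and> r dvd k \<longrightarrow> q \<le> r"
  shows "fstep k = k div q * (q - 1)"
proof (cases "prime k")
  case True
  then have "q = k"
    using q by (simp add: primes_dvd_imp_eq)
  then show ?thesis
    using True k by (simp add: fstep_def)
next
  case False
  obtain e where "k = q * e"
    using q by blast
  then show ?thesis
    using False dlarge_eq_div_least_prime_factor[OF k False q least] prime_gt_0_nat[OF q(1)]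
    by (simp add: fstep_def diff_mult_distrib2 mult.commute)
qed

lemma fstep_pos_less:
  fixes k :: nat
  assumes "k > 1"
  shows "0 < fstep k \<and> fstep k < k"
proof -
  obtain q where q: "prime q" "q dvd k" "\<forall>r. prime r \<and> r dvd k \<longrightarrow> q \<le> r"
    using ex_least_prime_factor[OF assms] by blast
  obtain e where e: "k = q * e"
    using q by blast
  have "q > 1"
    using q prime_gt_1_nat by blast
  have "e > 0"
    using e assms by (cases e) auto
  have "fstep k = e * (q - 1)"
    using fstep_eq_least_prime_factor[OF assms q] e \<open>q > 1\<close> by simp
  then show ?thesis
    using e \<open>q > 1\<close> \<open>e > 0\<close> by simp
qed

lemma fstep_mult_prime:
  fixes m p :: nat
  assumes p: "prime p" and m: "m > 1"
    and bound: "\<forall>q. prime q \<and> q dvd m \<longrightarrow> q \<le> p"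
  shows "fstep (m * p) = fstep m * p"
proof -
  obtain q where q: "prime q" "q dvd m" and least: "\<forall>r. prime r \<and> r dvd m \<longrightarrow> q \<le> r"
    using ex_least_prime_factor[OF m] by blast
  have "q \<le> p"
    using bound q by blast
  have least_mp: "\<forall>r. prime r \<and> r dvd m * p \<longrightarrow> q \<le> r"
  proof (intro allI impI)
    fix r assume "prime r \<and> r dvd m * p"
    then have "r dvd m \<or> r = p"
      using p by (auto simp: prime_dvd_mult_iff primes_dvd_imp_eq)
    then show "q \<le> r"
      using least \<open>prime r \<and> r dvd m * p\<close> \<open>q \<le> p\<close> by auto
  qed
  have "m * p > 1"
    using m p prime_gt_1_nat less_1_mult by blast
  then have "fstep (m * p) = m * p div q * (q - 1)"
    using fstep_eq_least_prime_factor q least_mp by simp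
  also have "\<dots> = fstep m * p"
    using fstep_eq_least_prime_factor[OF m q least] q by (auto simp: div_mult_swap)
  finally show ?thesis .
qed

lemma fstep_prime_factors_le:
  fixes m p :: nat
  assumes m: "m > 1" and bound: "\<forall>q. prime q \<and> q dvd m \<longrightarrow> q \<le> p"
  shows "\<forall>r. prime r \<and> r dvd fstep m \<longrightarrow> r \<le> p"
proof (intro allI impI)
  fix r assume r: "prime r \<and> r dvd fstep m"
  obtain q where q: "prime q" "q dvd m" and least: "\<forall>r. prime r \<and> r dvd m \<longrightarrow> q \<le> r"
    using ex_least_prime_factor[OF m] by blast
  have "prime r" "r dvd m div q * (q - 1)"
    using r fstep_eq_least_prime_factor[OF m q least] by auto
  then have "r dvd m div q \<or> r dvd q - 1"
    by (simp add: prime_dvd_mult_iff)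
  then show "r \<le> p"
  proof
    assume "r dvd m div q"
    then have "r dvd m div q * q"
      by (rule dvd_mult2)
    then have "r dvd m"
      using q(2) by simp
    then show ?thesis
      using bound r by blast
  next
    assume "r dvd q - 1"
    moreover have "q > 1" "q \<le> p"
      using q bound prime_gt_1_nat by auto
    ultimately show ?thesis
      using dvd_imp_le[of r "q - 1"] by simp
  qed
qed

lemma Collect_nat_eq_insert_0: "P 0 \<Longrightarrow> {i::nat. P i} = insert 0 (Suc ` {i. P (Suc i)})"
  by (auto simp: image_iff) (metis not0_implies_Suc)

lemma Fset_eq_image: "Fset k = (\<lambda>i. (fstep ^^ i) k) ` {i. \<forall>j<i. (fstep ^^ j) k \<noteq> 1}"
  unfolding Fset_def by auto

lemma Fset_1: "Fset 1 = {1}"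
  unfolding Fset_def by (auto intro!: exI[of _ 0]) (metis funpow_0 gr0I)

lemma Fset_unfold:
  assumes "m \<noteq> 1"
  shows "Fset m = insert m (Fset (fstep m))"
proof -
  have iter: "(fstep ^^ Suc i) m = (fstep ^^ i) (fstep m)" for i
    by (simp only: funpow_Suc_right comp_def)
  have guard: "(\<forall>j<Suc i. (fstep ^^ j) m \<noteq> 1) \<longleftrightarrow> (\<forall>j<i. (fstep ^^ j) (fstep m) \<noteq> 1)" for i
    using assms by (simp only: All_less_Suc2 iter funpow_0 simp_thms)
  have indices: "{i. \<forall>j<i. (fstep ^^ j) m \<noteq> 1}
      = insert 0 (Suc ` {i. \<forall>j<i. (fstep ^^ j) (fstep m) \<noteq> 1})"
    using Collect_nat_eq_insert_0[of "\<lambda>i. \<forall>j<i. (fstep ^^ j) m \<noteq> 1"] unfolding guard by simp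
  show ?thesis
    unfolding Fset_eq_image[of m] Fset_eq_image[of "fstep m"] indices image_insert image_image iter
    by simp
qed

lemma Fset_subset_atLeastAtMost: "k \<ge> 1 \<Longrightarrow> Fset k \<subseteq> {1..k}"
proof (induction k rule: less_induct)
  case (less k)
  show ?case
  proof (cases "k = 1")
    case True
    then show ?thesis
      unfolding True Fset_1 by simp
  next
    case False
    then have "0 < fstep k \<and> fstep k < k"
      using fstep_pos_less less.prems by simp
    then show ?thesis
      using less.IH[of "fstep k"] Fset_unfold[OF False] by auto
  qed
qed

lemma Fset_mult_prime:
  fixes m p :: nat
  assumes p: "prime p" and "m \<ge> 1"
    and "\<forall>q. prime q \<and> q dvd m \<longrightarrow> q \<le> p"
  shows "Fset (m * p) = (*) p ` Fset m \<union> Fset (p - 1)"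
  using assms(2,3)
proof (induction m rule: less_induct)
  case (less m)
  have "p > 1"
    using p prime_gt_1_nat by blast
  show ?case
  proof (cases "m = 1")
    case True
    then show ?thesis
      using Fset_unfold[of p] \<open>p > 1\<close> p unfolding True Fset_1 by (simp add: fstep_def)
  next
    case False
    then have m: "m > 1"
      using less.prems by simp
    have IH: "Fset (fstep m * p) = (*) p ` Fset (fstep m) \<union> Fset (p - 1)"
      using less.IH fstep_pos_less[OF m] fstep_prime_factors_le[OF m] less.prems(2)
      by (simp add: Suc_leI)
    have "m * p \<noteq> 1"
      using m \<open>p > 1\<close> by simp
    then have "Fset (m * p) = insert (m * p) (Fset (fstep m * p))"
      using Fset_unfold fstep_mult_prime[OF p m less.prems(2)] by simp
    then show ?thesis
      using IH Fset_unfold[OF False] by (auto simp: mult.commute)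
  qed
qed

lemma Dset_mult_prime_not_dvd:
  fixes k p :: nat
  assumes "prime p"
  shows "{d \<in> Dset (k * p). \<not> p dvd d} = {d \<in> Dset k. \<not> p dvd d}"
proof -
  have "d dvd k * p \<longleftrightarrow> d dvd k" if "\<not> p dvd d" for d
    using prime_imp_coprime[OF assms that] by (simp add: coprime_commute coprime_dvd_mult_left_iff)
  then show ?thesis
    unfolding Dset_def by auto
qed

lemma Dset_mult_prime:
  fixes k p :: nat
  assumes "prime p"
  shows "Dset (k * p) = (*) p ` Dset k \<union> {d \<in> Dset k. \<not> p dvd d}"
proof -
  have "{d \<in> Dset (k * p). p dvd d} = (*) p ` Dset k"
    using prime_gt_0_nat[OF assms] unfolding Dset_def by (auto simp: mult.commute)
  then show ?thesis
    using Dset_mult_prime_not_dvd[OF assms, of k] by blast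
qed

lemma image_mult_Un_cancel:
  fixes p :: nat
  assumes "p \<noteq> 0" and B: "\<forall>x\<in>B. \<not> p dvd x" and E: "\<forall>x\<in>E. \<not> p dvd x"
    and eq: "(*) p ` A \<union> B = (*) p ` C \<union> E"
  shows "A = C \<and> B = E"
proof -
  have multiples: "{x \<in> (*) p ` X \<union> Y. p dvd x} = (*) p ` X"
    and non_multiples: "{x \<in> (*) p ` X \<union> Y. \<not> p dvd x} = Y"
    if "\<forall>x\<in>Y. \<not> p dvd x" for X Y
    using that by auto
  have "(*) p ` A = (*) p ` C"
    using multiples[OF B, of A] multiples[OF E, of C] eq by simp
  moreover have "B = E"
    using non_multiples[OF B, of A] non_multiples[OF E, of C] eq by simp
  ultimately show ?thesis
    using assms(1) by (simp add: inj_image_eq_iff inj_on_mult)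
qed

theorem proposition5:
  fixes n p :: nat
  assumes "n > 1"
    and "Fset n = Dset n"
    and "prime p" and "p dvd n"
    and "\<forall>q. prime q \<and> q dvd n \<longrightarrow> q \<le> p"
  shows "Fset (n div p) = Dset (n div p) \<and> Fset (n * p) = Dset (n * p)"
proof -
  define m where "m = n div p"
  have n: "n = m * p" and "p > 1"
    using assms(3,4) prime_gt_1_nat by (auto simp: m_def)
  have "m \<ge> 1"
    using n assms(1) by (cases m) auto
  have small: "\<forall>x\<in>Fset (p - 1). \<not> p dvd x"
    using Fset_subset_atLeastAtMost[of "p - 1"] \<open>p > 1\<close> by (fastforce dest: dvd_imp_le)
  have "(*) p ` Fset m \<union> Fset (p - 1) = (*) p ` Dset m \<union> {d \<in> Dset m. \<not> p dvd d}"
    using Fset_mult_prime[OF assms(3) \<open>m \<ge> 1\<close>] Dset_mult_prime[OF assms(3)] assms(2,5) n by auto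
  then have "Fset m = Dset m \<and> Fset (p - 1) = {d \<in> Dset m. \<not> p dvd d}"
    using \<open>p > 1\<close> by (intro image_mult_Un_cancel[OF _ small]) auto
  then have Fm: "Fset m = Dset m" and Fp: "Fset (p - 1) = {d \<in> Dset m. \<not> p dvd d}"
    by blast+
  have "Fset (n * p) = (*) p ` Fset n \<union> Fset (p - 1)"
    using Fset_mult_prime[OF assms(3)] assms(1,5) by simp
  also have "\<dots> = (*) p ` Dset n \<union> {d \<in> Dset n. \<not> p dvd d}"
    using assms(2) Fp Dset_mult_prime_not_dvd[OF assms(3), of m] n by simp
  also have "\<dots> = Dset (n * p)"
    using Dset_mult_prime[OF assms(3)] by simp
  finally show ?thesis
    using Fm m_def by simp
qed

end
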